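(* Let $0 \le \eta \le 1$ and let $X$ be a Bernoulli random variable with $P_\theta(X=1) = 1 - P_\theta(X=0) = \theta$, where the parameter $\theta$ is known to lie in $\Omega = \{\theta : 0 \le \theta \le \eta\}$. Consider estimators $\delta(X)$ of $\theta$ (i.e., real-valued functions of $X$) under the squared error loss $L(\theta,d) = (\theta-d)^2$. Then a minimax estimator, i.e., an estimator $\delta$ minimizing $$\sup_{0\le\theta\le\eta} \mathbf{E}_\theta\big(\theta - \delta(X)\big)^2,$$ equivalently a pair of real numbers $(a,b)=(\delta(0),\delta(1))$ minimizing $$\sup_{0\le\theta\le\eta}\Big[(2a-2b+1)\theta^2 + (b^2-a^2-2a)\theta + a^2\Big],$$ is given by $$\delta(X=0) = a^* = \begin{cases} \sqrt{1-\eta} - (1-\eta) & \text{if } 0 \le \eta \le \tfrac34,\\ \tfrac14 & \text{if } \tfrac34 < \eta \le 1,\end{cases}$$ and $$\delta(X=1) = b^* = \min\{\eta, \tfrac34\} = \begin{cases} \eta & \text{if } \eta \le \tfrac34,\\ \tfrac34 & \text{if } \eta > \tfrac34.\end{cases}$$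
   Context: Based on a single observation $X$ (sample size $n=1$). An estimator is determined by its two values $\delta(0)=a$ and $\delta(1)=b$, and its risk is $\mathbf{E}_\theta(\theta-\delta(X))^2 = (\theta-a)^2(1-\theta) + (\theta-b)^2\theta$. *)

theory Defs
  imports Complex_Main
begin

text \<open>Risk of the estimator delta with delta(0) = a, delta(1) = b for a single
  Bernoulli(theta) observation under squared error loss:
  E_theta (theta - delta X)^2 = (theta - a)^2 (1 - theta) + (theta - b)^2 theta.\<close>
definition bern_risk :: "real \<Rightarrow> real \<Rightarrow> real \<Rightarrow> real" where
  "bern_risk a b \<theta> = (\<theta> - a)\<^sup>2 * (1 - \<theta>) + (\<theta> - b)\<^sup>2 * \<theta>"

definition max_risk :: "real \<Rightarrow> real \<Rightarrow> real \<Rightarrow> real" where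
  "max_risk \<eta> a b = (SUP \<theta>\<in>{0..\<eta>}. bern_risk a b \<theta>)"

definition a_star :: "real \<Rightarrow> real" where
  "a_star \<eta> = (if \<eta> \<le> 3/4 then sqrt (1 - \<eta>) - (1 - \<eta>) else 1/4)"

definition b_star :: "real \<Rightarrow> real" where
  "b_star \<eta> = min \<eta> (3/4)"

end

theory Submission
  imports Defs
begin

text \<open>Write \<open>s = sqrt (1 - \<eta>)\<close>. For \<open>\<eta> \<le> 3/4\<close> the risk of \<open>(a*, b*) = (s - s\<^sup>2, 1 - s\<^sup>2)\<close> is
  \<open>(s (1 - s))\<^sup>2 + (2 s - 1) \<theta> (\<theta> - \<eta>)\<close>, so it attains its maximum \<open>(s (1 - s))\<^sup>2\<close> at both
  endpoints \<open>\<theta> = 0\<close> and \<open>\<theta> = \<eta>\<close>, and no estimator has smaller risk at both endpoints.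
  For \<open>\<eta> > 3/4\<close> the estimator \<open>(1/4, 3/4)\<close> is an equalizer with constant risk \<open>1/16\<close>,
  which is the Bayes risk of the prior putting mass \<open>1/3\<close> on \<open>0\<close> and \<open>2/3\<close> on \<open>3/4\<close>.\<close>

lemma bdd_above_bern_risk: "bdd_above (bern_risk a b ` {0..e})"
proof (cases "{0..e} = {}")
  case False
  have "continuous_on {0..e} (bern_risk a b)"
    unfolding bern_risk_def by (intro continuous_intros)
  then obtain x where "\<forall>y\<in>{0..e}. bern_risk a b y \<le> bern_risk a b x"
    using continuous_attains_sup[OF compact_Icc False] by blast
  then show ?thesis by (intro bdd_aboveI2) auto
qed simp

lemma bern_risk_le_max_risk:
  assumes "t \<in> {0..e}"
  shows "bern_risk a b t \<le> max_risk e a b"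
  unfolding max_risk_def using bdd_above_bern_risk assms by (rule cSUP_upper2) simp

lemma max_risk_le:
  assumes "\<And>t. t \<in> {0..e} \<Longrightarrow> bern_risk a b t \<le> M" and "0 \<le> e"
  shows "max_risk e a b \<le> M"
  unfolding max_risk_def using assms by (intro cSUP_least) auto

lemma bern_risk_at_0 [simp]: "bern_risk a b 0 = a\<^sup>2"
  by (simp add: bern_risk_def)

lemma bern_risk_ge_at_left_outcome:
  assumes "0 \<le> \<theta>"
  shows "(\<theta> - a)\<^sup>2 * (1 - \<theta>) \<le> bern_risk a b \<theta>"
  unfolding bern_risk_def using assms by simp

lemma bern_risk_minimax_small_eq:
  "bern_risk (s - s\<^sup>2) (1 - s\<^sup>2) t = (s * (1 - s))\<^sup>2 + (2 * s - 1) * (t * (t - (1 - s\<^sup>2)))"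
  unfolding bern_risk_def by (simp add: power2_eq_square algebra_simps)

lemma bern_risk_minimax_small_le:
  assumes "1/2 \<le> s" and "t \<in> {0..1 - s\<^sup>2}"
  shows "bern_risk (s - s\<^sup>2) (1 - s\<^sup>2) t \<le> (s * (1 - s))\<^sup>2"
proof -
  have "(2 * s - 1) * (t * (t - (1 - s\<^sup>2))) \<le> 0"
    using assms by (intro mult_nonneg_nonpos) (auto intro: mult_nonneg_nonpos)
  then show ?thesis by (simp add: bern_risk_minimax_small_eq)
qed

lemma bern_risk_endpoints_lower_bound:
  fixes s :: real
  assumes "0 \<le> s" and "s \<le> 1"
  shows "(s * (1 - s))\<^sup>2 \<le> max (bern_risk a b 0) (bern_risk a b (1 - s\<^sup>2))"
proof (cases "s * (1 - s) \<le> \<bar>a\<bar>")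
  case True
  then have "(s * (1 - s))\<^sup>2 \<le> a\<^sup>2"
    using assms by (metis abs_le_square_iff abs_of_nonneg mult_nonneg_nonneg diff_ge_0_iff_ge)
  then show ?thesis by simp
next
  case False
  then have "1 - s \<le> 1 - s\<^sup>2 - a"
    by (simp add: power2_eq_square algebra_simps)
  then have "s * (1 - s) \<le> s * (1 - s\<^sup>2 - a)"
    using assms(1) by (rule mult_left_mono)
  then have "(s * (1 - s))\<^sup>2 \<le> (s * (1 - s\<^sup>2 - a))\<^sup>2"
    using assms by (intro power_mono) auto
  also have "\<dots> = (1 - s\<^sup>2 - a)\<^sup>2 * (1 - (1 - s\<^sup>2))"
    by (simp add: power_mult_distrib)
  also have "\<dots> \<le> bern_risk a b (1 - s\<^sup>2)"
    using assms by (intro bern_risk_ge_at_left_outcome) (simp add: power_le_one)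
  finally show ?thesis by simp
qed

lemma bern_risk_quarter_three_quarters: "bern_risk (1/4) (3/4) t = 1/16"
  unfolding bern_risk_def by (simp add: power2_eq_square field_simps)

lemma bayes_risk_two_point_lower_bound:
  "1/16 \<le> (1/3) * bern_risk a b 0 + (2/3) * bern_risk a b (3/4)"
proof -
  have "(1/3) * bern_risk a b 0 + (2/3) * bern_risk a b (3/4) = 1/16 + ((a - 1/4)\<^sup>2 + (3/4 - b)\<^sup>2) / 2"
    unfolding bern_risk_def by (simp add: power2_eq_square field_simps)
  then show ?thesis by simp
qed

lemma max_risk_star_le_endpoints:
  assumes "0 \<le> \<eta>" and "\<eta> \<le> 3/4"
  shows "max_risk \<eta> (a_star \<eta>) (b_star \<eta>) \<le> max (bern_risk a b 0) (bern_risk a b \<eta>)"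
proof -
  define s where "s = sqrt (1 - \<eta>)"
  have \<eta>_eq: "\<eta> = 1 - s\<^sup>2" and "0 \<le> s" "s \<le> 1"
    using assms by (simp_all add: s_def)
  have "1/2 \<le> s"
    using assms(2) real_sqrt_le_mono[of "1/4" "1 - \<eta>"] by (simp add: s_def real_sqrt_divide)
  have "a_star \<eta> = s - s\<^sup>2" "b_star \<eta> = 1 - s\<^sup>2"
    using assms by (simp_all add: a_star_def b_star_def s_def)
  then have "max_risk \<eta> (a_star \<eta>) (b_star \<eta>) = max_risk (1 - s\<^sup>2) (s - s\<^sup>2) (1 - s\<^sup>2)"
    by (simp add: \<eta>_eq)
  also have "\<dots> \<le> (s * (1 - s))\<^sup>2"
    using \<open>1/2 \<le> s\<close> assms(1) unfolding \<eta>_eq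
    by (intro max_risk_le bern_risk_minimax_small_le) simp_all
  also have "\<dots> \<le> max (bern_risk a b 0) (bern_risk a b \<eta>)"
    unfolding \<eta>_eq using \<open>0 \<le> s\<close> \<open>s \<le> 1\<close> by (rule bern_risk_endpoints_lower_bound)
  finally show ?thesis .
qed

lemma max_risk_star_le_bayes_risk:
  assumes "3/4 < \<eta>"
  shows "max_risk \<eta> (a_star \<eta>) (b_star \<eta>) \<le> (1/3) * bern_risk a b 0 + (2/3) * bern_risk a b (3/4)"
proof -
  have "max_risk \<eta> (a_star \<eta>) (b_star \<eta>) \<le> 1/16"
    using assms by (intro max_risk_le) (simp_all add: a_star_def b_star_def bern_risk_quarter_three_quarters)
  also have "\<dots> \<le> (1/3) * bern_risk a b 0 + (2/3) * bern_risk a b (3/4)"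
    by (rule bayes_risk_two_point_lower_bound)
  finally show ?thesis .
qed

theorem theorem1:
  fixes \<eta> :: real
  assumes "0 \<le> \<eta>" and "\<eta> \<le> 1"
  shows "\<forall>a b. max_risk \<eta> (a_star \<eta>) (b_star \<eta>) \<le> max_risk \<eta> a b"
proof (intro allI)
  fix a b
  have risk_0: "bern_risk a b 0 \<le> max_risk \<eta> a b"
    using assms by (intro bern_risk_le_max_risk) simp
  show "max_risk \<eta> (a_star \<eta>) (b_star \<eta>) \<le> max_risk \<eta> a b"
  proof (cases "\<eta> \<le> 3/4")
    case True
    have "max_risk \<eta> (a_star \<eta>) (b_star \<eta>) \<le> max (bern_risk a b 0) (bern_risk a b \<eta>)"
      using assms(1) True by (rule max_risk_star_le_endpoints)
    also have "\<dots> \<le> max_risk \<eta> a b"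
      using risk_0 assms by (simp add: bern_risk_le_max_risk)
    finally show ?thesis .
  next
    case False
    then have "max_risk \<eta> (a_star \<eta>) (b_star \<eta>) \<le> (1/3) * bern_risk a b 0 + (2/3) * bern_risk a b (3/4)"
      by (intro max_risk_star_le_bayes_risk) simp
    also have "\<dots> \<le> (1/3) * max_risk \<eta> a b + (2/3) * max_risk \<eta> a b"
      using False risk_0 by (intro add_mono mult_left_mono bern_risk_le_max_risk) auto
    finally show ?thesis by simp
  qed
qed

end
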